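(* Let $W$ be an $\epsilon$-spectral cluster of $G_0$, let $V\subseteq V_0$ be closed in $G_0$, let $G=G_0|V$, and let $S\subseteq V$ be closed in $G$ and dominate $W$. Suppose $v\in S$ has $d_G(v)>0$ and at least $\frac59 d_G(v)$ of its $G$-neighbors in $V\setminus S$. Then $S\setminus\{v\}$ is closed in $G$ and dominates $W$. Consequently, performing any sequence of such moves (local improvements of $V\setminus S$) preserves that $S$ is closed in $G$ and dominates $W$.
   Context: Standing setting: $G_0=(V_0,E_0)$ is a finite simple undirected graph and $0<\epsilon\le 1/2000000$. For a graph $H$, $d_H(v)$ is the degree, $\mathrm{vol}_H(S)=\sum_{v\in S}d_H(v)$, $E(S,T)$ is the set of edges with one endpoint in $S$ and the other in $T$, $\partial_H S=E(S,V(H)\setminus S)$. For $V\subseteq V_0$, $G_0|V$ is the induced subgraph. An $\epsilon$-spectral cluster of $G_0$ is $W\subseteq V_0$ with $\mathrm{vol}_{G_0}(W)>0$, $|\partial_{G_0}W|\le\epsilon\,\mathrm{vol}_{G_0}(W)$, and for every $A\subseteq W$ with $r=\mathrm{vol}_{G_0}(A)/\mathrm{vol}_{G_0}(W)$, $|E(A,W\setminus A)|\ge(r(1-r)-\epsilon)\mathrm{vol}_{G_0}(W)$. A set $A\subseteq V(H)$ is closed in $H$ if no $v\in V(H)\setminus A$ with $d_H(v)>0$ has at least $\frac59 d_H(v)$ of its $H$-neighbors in $A$. A set $A\subseteq V_0$ dominates $W$ if $\mathrm{vol}_{G_0}(W\cap A)>(1-3\epsilon)\mathrm{vol}_{G_0}(W)$.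 *)

theory Defs
  imports Complex_Main
begin

text \<open>Induced subgraphs G0|U are represented by the vertex set U (edges: those of Adj
with both endpoints in U).\<close>

definition simple_graph :: "'a set \<Rightarrow> ('a \<Rightarrow> 'a \<Rightarrow> bool) \<Rightarrow> bool" where
  "simple_graph V0 Adj \<longleftrightarrow> finite V0 \<and> (\<forall>u v. Adj u v \<longrightarrow> Adj v u)
     \<and> (\<forall>u. \<not> Adj u u) \<and> (\<forall>u v. Adj u v \<longrightarrow> u \<in> V0 \<and> v \<in> V0)"

definition nbrs :: "('a \<Rightarrow> 'a \<Rightarrow> bool) \<Rightarrow> 'a set \<Rightarrow> 'a \<Rightarrow> 'a set" where
  "nbrs Adj U v = {u \<in> U. Adj v u}"

definition deg :: "('a \<Rightarrow> 'a \<Rightarrow> bool) \<Rightarrow> 'a set \<Rightarrow> 'a \<Rightarrow> nat" where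
  "deg Adj U v = card (nbrs Adj U v)"

definition vol :: "('a \<Rightarrow> 'a \<Rightarrow> bool) \<Rightarrow> 'a set \<Rightarrow> 'a set \<Rightarrow> nat" where
  "vol Adj U S = (\<Sum>v\<in>S. deg Adj U v)"

definition edges_between :: "('a \<Rightarrow> 'a \<Rightarrow> bool) \<Rightarrow> 'a set \<Rightarrow> 'a set \<Rightarrow> 'a set set" where
  "edges_between Adj S T = {{u, w} | u w. u \<in> S \<and> w \<in> T \<and> Adj u w}"

definition spectral_cluster :: "'a set \<Rightarrow> ('a \<Rightarrow> 'a \<Rightarrow> bool) \<Rightarrow> real \<Rightarrow> 'a set \<Rightarrow> bool" where
  "spectral_cluster V0 Adj \<epsilon> W \<longleftrightarrow> W \<subseteq> V0 \<and> vol Adj V0 W > 0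
     \<and> real (card (edges_between Adj W (V0 - W))) \<le> \<epsilon> * real (vol Adj V0 W)
     \<and> (\<forall>A\<subseteq>W. let r = real (vol Adj V0 A) / real (vol Adj V0 W) in
          real (card (edges_between Adj A (W - A))) \<ge> (r * (1 - r) - \<epsilon>) * real (vol Adj V0 W))"

definition closed_in_graph :: "('a \<Rightarrow> 'a \<Rightarrow> bool) \<Rightarrow> 'a set \<Rightarrow> 'a set \<Rightarrow> bool" where
  "closed_in_graph Adj U A \<longleftrightarrow> A \<subseteq> U \<and>
     (\<forall>v \<in> U - A. deg Adj U v > 0 \<longrightarrow>
        \<not> (real (card (nbrs Adj U v \<inter> A)) \<ge> 5/9 * real (deg Adj U v)))"

definition dominates :: "'a set \<Rightarrow> ('a \<Rightarrow> 'a \<Rightarrow> bool) \<Rightarrow> real \<Rightarrow> 'a set \<Rightarrow> 'a set \<Rightarrow> bool" where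
  "dominates V0 Adj \<epsilon> A W \<longleftrightarrow>
     real (vol Adj V0 (W \<inter> A)) > (1 - 3 * \<epsilon>) * real (vol Adj V0 W)"

definition improve_move :: "('a \<Rightarrow> 'a \<Rightarrow> bool) \<Rightarrow> 'a set \<Rightarrow> 'a set \<Rightarrow> 'a set \<Rightarrow> bool" where
  "improve_move Adj V S S' \<longleftrightarrow> (\<exists>v \<in> S. deg Adj V v > 0 \<and>
      real (card (nbrs Adj V v \<inter> (V - S))) \<ge> 5/9 * real (deg Adj V v) \<and> S' = S - {v})"

end

theory Submission
  imports Defs
begin

text \<open>Closedness is transitive: a set closed in the induced subgraph G0|V, with V closed
in G0, is closed in G0 itself, so every vertex of G0 outside it sends more than 4/9 of
its edges out of it. Let S' = S - {v} and B = W - S'. The cut inequality of the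
spectral cluster, applied to B, then gives the quadratic bound
4/9 vol B \<le> vol(B)^2 / vol W + \<epsilon> vol W, so vol B is either tiny or a constant fraction
of vol W. But vol B = d(v) + vol(W - S), and d(v) is at most 9/5 times the number of
neighbours of v outside S, which lie in W - S or across the boundary of W; hence
vol B = O(\<epsilon> vol W), and the quadratic bound forces vol B < 3\<epsilon> vol W.\<close>

lemma finite_nbrs: "simple_graph V0 Adj \<Longrightarrow> finite (nbrs Adj U v)"
  unfolding simple_graph_def nbrs_def by (metis (no_types, lifting) finite_subset mem_Collect_eq subsetI)

lemma nbrs_Int_subset: "T \<subseteq> U \<Longrightarrow> nbrs Adj U u \<inter> T = nbrs Adj T u"
  unfolding nbrs_def by auto

lemma nbrs_Int_Diff: "nbrs Adj U u \<inter> (U - S) = nbrs Adj U u - S"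
  unfolding nbrs_def by auto

lemma finite_edges_between:
  assumes "simple_graph V0 Adj"
  shows "finite (edges_between Adj A B)"
proof -
  have "edges_between Adj A B \<subseteq> (\<lambda>(u, w). {u, w}) ` (V0 \<times> V0)"
    using assms unfolding edges_between_def simple_graph_def by blast
  moreover have "finite V0" using assms unfolding simple_graph_def by blast
  ultimately show ?thesis by (simp add: finite_subset)
qed

lemma closed_in_graphD:
  assumes "closed_in_graph Adj U A" "u \<in> U - A" "0 < deg Adj U u"
  shows "real (card (nbrs Adj U u \<inter> A)) < 5/9 * real (deg Adj U u)"
  using assms unfolding closed_in_graph_def by (simp add: not_le)

lemma closed_in_graph_nbrs_outside:
  assumes graph: "simple_graph V0 Adj" and closed: "closed_in_graph Adj U A" and u: "u \<in> U - A"
  shows "4/9 * real (deg Adj U u) \<le> real (card (nbrs Adj U u - A))"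
proof (cases "deg Adj U u = 0")
  case False
  have "deg Adj U u = card (nbrs Adj U u \<inter> A) + card (nbrs Adj U u - A)"
    unfolding deg_def using card_Int_Diff[OF finite_nbrs[OF graph]] .
  with closed_in_graphD[OF closed u] False show ?thesis by linarith
qed simp

lemma closed_in_graph_trans:
  assumes graph: "simple_graph V0 Adj" and "V \<subseteq> V0"
    and V_closed: "closed_in_graph Adj V0 V" and T_closed: "closed_in_graph Adj V T"
  shows "closed_in_graph Adj V0 T"
  unfolding closed_in_graph_def
proof (intro conjI ballI impI notI)
  have "T \<subseteq> V" using T_closed unfolding closed_in_graph_def by blast
  then show "T \<subseteq> V0" using \<open>V \<subseteq> V0\<close> by blast
  fix u assume u: "u \<in> V0 - T" and pos: "0 < deg Adj V0 u"
    and many: "5/9 * real (deg Adj V0 u) \<le> real (card (nbrs Adj V0 u \<inter> T))"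
  define N where "N = nbrs Adj V0 u"
  have fin: "finite N" unfolding N_def using finite_nbrs[OF graph] .
  have NT_NV: "card (N \<inter> T) \<le> card (N \<inter> V)"
    using \<open>T \<subseteq> V\<close> fin by (intro card_mono) auto
  have NV_N: "card (N \<inter> V) \<le> card N" using fin by (intro card_mono) auto
  show False
  proof (cases "u \<in> V")
    case True
    have NV: "N \<inter> V = nbrs Adj V u" and NT: "N \<inter> T = nbrs Adj V u \<inter> T"
      unfolding N_def using nbrs_Int_subset[OF \<open>V \<subseteq> V0\<close>] \<open>T \<subseteq> V\<close> by auto
    show False
    proof (cases "deg Adj V u = 0")
      case True
      then show False using many pos NT_NV NV unfolding deg_def N_def by simp
    next
      case False
      with closed_in_graphD[OF T_closed] \<open>u \<in> V\<close> u
      have "real (card (N \<inter> T)) < 5/9 * real (card (N \<inter> V))"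
        unfolding NT NV deg_def by blast
      then show False using many NV_N unfolding deg_def N_def by linarith
    qed
  next
    case False
    with closed_in_graphD[OF V_closed] u pos
    have "real (card (N \<inter> V)) < 5/9 * real (card N)" unfolding N_def deg_def by blast
    then show False using many NT_NV unfolding deg_def N_def by linarith
  qed
qed

lemma closed_in_graph_remove:
  assumes graph: "simple_graph V0 Adj" and S_closed: "closed_in_graph Adj V S"
    and v_deg: "deg Adj V v > 0"
    and v_out: "real (card (nbrs Adj V v \<inter> (V - S))) \<ge> 5/9 * real (deg Adj V v)"
  shows "closed_in_graph Adj V (S - {v})"
  unfolding closed_in_graph_def
proof (intro conjI ballI impI)
  show "S - {v} \<subseteq> V" using S_closed unfolding closed_in_graph_def by auto
  fix u assume u: "u \<in> V - (S - {v})" and pos: "0 < deg Adj V u"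
  have fin: "finite (nbrs Adj V u)" using finite_nbrs[OF graph] .
  show "\<not> 5/9 * real (deg Adj V u) \<le> real (card (nbrs Adj V u \<inter> (S - {v})))"
  proof (cases "u = v")
    case True
    have "v \<notin> nbrs Adj V v" using graph unfolding simple_graph_def nbrs_def by blast
    then have "nbrs Adj V v \<inter> (S - {v}) = nbrs Adj V v \<inter> S" by blast
    moreover have "deg Adj V v = card (nbrs Adj V v \<inter> S) + card (nbrs Adj V v - S)"
      unfolding deg_def using card_Int_Diff[OF finite_nbrs[OF graph]] .
    ultimately show ?thesis using v_out v_deg unfolding True nbrs_Int_Diff by (simp, linarith)
  next
    case False
    then have "u \<in> V - S" using u by auto
    moreover have "card (nbrs Adj V u \<inter> (S - {v})) \<le> card (nbrs Adj V u \<inter> S)"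
      using fin by (intro card_mono) auto
    ultimately show ?thesis using closed_in_graphD[OF S_closed _ pos] by fastforce
  qed
qed

lemma dominates_iff_vol_Diff:
  assumes "finite W"
  shows "dominates V0 Adj \<epsilon> A W \<longleftrightarrow> real (vol Adj V0 (W - A)) < 3 * \<epsilon> * real (vol Adj V0 W)"
proof -
  have "vol Adj V0 W = vol Adj V0 (W \<inter> A) + vol Adj V0 (W - A)"
    unfolding vol_def using sum.Int_Diff[OF assms] .
  then show ?thesis unfolding dominates_def by (simp add: algebra_simps)
qed

lemma card_edges_between_le_sum:
  assumes graph: "simple_graph V0 Adj" and "B \<subseteq> V0"
  shows "card (edges_between Adj B C) \<le> (\<Sum>u\<in>B. card (nbrs Adj V0 u \<inter> C))"
proof -
  have finB: "finite B" using assms unfolding simple_graph_def by (auto intro: finite_subset)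
  have edges: "edges_between Adj B C = (\<lambda>(u, w). {u, w}) ` (SIGMA u:B. nbrs Adj V0 u \<inter> C)"
    using graph unfolding edges_between_def nbrs_def simple_graph_def by auto
  have "card (edges_between Adj B C) \<le> card (SIGMA u:B. nbrs Adj V0 u \<inter> C)"
    unfolding edges by (rule card_image_le) (use finB finite_nbrs[OF graph] in auto)
  also have "\<dots> = (\<Sum>u\<in>B. card (nbrs Adj V0 u \<inter> C))"
    using finB finite_nbrs[OF graph] by (simp add: card_SigmaI)
  finally show ?thesis .
qed

text \<open>The cut between B and W - B is at least vol B - vol(B)^2 / vol W - \<epsilon> vol W by the
cluster property, and at most (1 - c) vol B by the hypothesis on the vertices of B.\<close>

lemma spectral_cluster_vol_bound:
  assumes graph: "simple_graph V0 Adj" and cluster: "spectral_cluster V0 Adj \<epsilon> W"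
    and "B \<subseteq> W"
    and outside: "\<And>u. u \<in> B \<Longrightarrow> c * real (deg Adj V0 u) \<le> real (card (nbrs Adj V0 u - (W - B)))"
  defines "x \<equiv> real (vol Adj V0 B)" and "w \<equiv> real (vol Adj V0 W)"
  shows "c * x \<le> x\<^sup>2 / w + \<epsilon> * w"
proof -
  have "W \<subseteq> V0" and w_pos: "w > 0" using cluster unfolding spectral_cluster_def w_def by auto
  then have "B \<subseteq> V0" using \<open>B \<subseteq> W\<close> by blast
  let ?inside = "\<lambda>u. real (card (nbrs Adj V0 u \<inter> (W - B)))"
  let ?outside = "\<lambda>u. real (card (nbrs Adj V0 u - (W - B)))"
  have "(x / w * (1 - x / w) - \<epsilon>) * w \<le> real (card (edges_between Adj B (W - B)))"
    using cluster \<open>B \<subseteq> W\<close> unfolding spectral_cluster_def x_def w_def Let_def by blast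
  also have "\<dots> \<le> (\<Sum>u\<in>B. ?inside u)"
    using card_edges_between_le_sum[OF graph \<open>B \<subseteq> V0\<close>] by (simp flip: of_nat_sum)
  moreover have "(x / w * (1 - x / w) - \<epsilon>) * w = x - x\<^sup>2 / w - \<epsilon> * w"
    using w_pos by (simp add: field_simps power2_eq_square)
  ultimately have cut: "x - x\<^sup>2 / w - \<epsilon> * w \<le> (\<Sum>u\<in>B. ?inside u)" by simp
  have "real (deg Adj V0 u) = ?inside u + ?outside u" for u
    unfolding deg_def using card_Int_Diff[OF finite_nbrs[OF graph]] by (simp flip: of_nat_add)
  then have "x = (\<Sum>u\<in>B. ?inside u) + (\<Sum>u\<in>B. ?outside u)"
    unfolding x_def vol_def of_nat_sum sum.distrib[symmetric] by simp
  moreover have "c * x \<le> (\<Sum>u\<in>B. ?outside u)"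
    unfolding x_def vol_def of_nat_sum sum_distrib_left using outside by (rule sum_mono)
  ultimately show ?thesis using cut by linarith
qed

lemma spectral_cluster_vol_Diff_closed:
  assumes graph: "simple_graph V0 Adj" and cluster: "spectral_cluster V0 Adj \<epsilon> W"
    and T_closed: "closed_in_graph Adj V0 T"
  shows "4/9 * real (vol Adj V0 (W - T))
    \<le> (real (vol Adj V0 (W - T)))\<^sup>2 / real (vol Adj V0 W) + \<epsilon> * real (vol Adj V0 W)"
proof (rule spectral_cluster_vol_bound[OF graph cluster])
  fix u assume u: "u \<in> W - T"
  have "W \<subseteq> V0" using cluster unfolding spectral_cluster_def by blast
  then have "4/9 * real (deg Adj V0 u) \<le> real (card (nbrs Adj V0 u - T))"
    using closed_in_graph_nbrs_outside[OF graph T_closed] u by blast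
  also have "\<dots> \<le> real (card (nbrs Adj V0 u - (W - (W - T))))"
    using finite_nbrs[OF graph] by (intro of_nat_mono card_mono) auto
  finally show "4/9 * real (deg Adj V0 u) \<le> real (card (nbrs Adj V0 u - (W - (W - T))))" .
qed simp

lemma card_nbrs_Diff_induced:
  assumes graph: "simple_graph V0 Adj" and "V \<subseteq> V0" "S \<subseteq> V" "c \<le> 1"
    and many: "c * real (deg Adj V v) \<le> real (card (nbrs Adj V v - S))"
  shows "c * real (deg Adj V0 v) \<le> real (card (nbrs Adj V0 v - S))"
proof -
  define N where "N = nbrs Adj V0 v"
  have fin: "finite N" unfolding N_def using finite_nbrs[OF graph] .
  have NV: "N \<inter> V = nbrs Adj V v" unfolding N_def using nbrs_Int_subset[OF \<open>V \<subseteq> V0\<close>] .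
  have "N - S = (N \<inter> V - S) \<union> (N - V)" using \<open>S \<subseteq> V\<close> by blast
  then have "card (N - S) = card (N \<inter> V - S) + card (N - V)"
    using fin by (simp add: card_Un_disjoint Int_Diff_disjoint Diff_Int_distrib2)
  then have "card (N - S) = card (nbrs Adj V v - S) + card (N - V)" unfolding NV .
  moreover have "card N = deg Adj V v + card (N - V)"
    unfolding deg_def NV[symmetric] using card_Int_Diff[OF fin] .
  ultimately show ?thesis
    using many mult_left_le[OF \<open>c \<le> 1\<close>, of "real (card (N - V))"]
    unfolding N_def deg_def by (simp add: distrib_left mult.commute)
qed

lemma card_nbrs_Int_le_vol:
  assumes graph: "simple_graph V0 Adj" and "v \<in> V0" "X \<subseteq> V0"
  shows "card (nbrs Adj V0 v \<inter> X) \<le> vol Adj V0 X"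
proof -
  have finX: "finite X" using assms unfolding simple_graph_def by (auto intro: finite_subset)
  have "card (nbrs Adj V0 v \<inter> X) = (\<Sum>u\<in>nbrs Adj V0 v \<inter> X. 1)" by simp
  also have "\<dots> \<le> (\<Sum>u\<in>nbrs Adj V0 v \<inter> X. deg Adj V0 u)"
  proof (rule sum_mono)
    fix u assume "u \<in> nbrs Adj V0 v \<inter> X"
    then have "v \<in> nbrs Adj V0 u" using graph \<open>v \<in> V0\<close> unfolding simple_graph_def nbrs_def by blast
    then show "1 \<le> deg Adj V0 u"
      unfolding deg_def using finite_nbrs[OF graph] by (metis card_0_eq empty_iff less_one not_le)
  qed
  also have "\<dots> \<le> vol Adj V0 X" unfolding vol_def using finX by (intro sum_mono2) auto
  finally show ?thesis .
qed

lemma card_nbrs_Diff_le_boundary: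
  assumes graph: "simple_graph V0 Adj" and "v \<in> W"
  shows "card (nbrs Adj V0 v - W) \<le> card (edges_between Adj W (V0 - W))"
proof (rule card_inj_on_le[where f = "\<lambda>w. {v, w}"])
  show "inj_on (\<lambda>w. {v, w}) (nbrs Adj V0 v - W)" unfolding inj_on_def by (simp add: doubleton_eq_iff)
  show "(\<lambda>w. {v, w}) ` (nbrs Adj V0 v - W) \<subseteq> edges_between Adj W (V0 - W)"
    unfolding edges_between_def nbrs_def using \<open>v \<in> W\<close> by blast
qed (rule finite_edges_between[OF graph])

lemma spectral_cluster_card_nbrs_Diff:
  assumes graph: "simple_graph V0 Adj" and cluster: "spectral_cluster V0 Adj \<epsilon> W" and "v \<in> W"
  shows "real (card (nbrs Adj V0 v - S)) \<le> real (vol Adj V0 (W - S)) + \<epsilon> * real (vol Adj V0 W)"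
proof -
  have "W \<subseteq> V0" using cluster unfolding spectral_cluster_def by blast
  have "card (nbrs Adj V0 v - S) \<le> card (nbrs Adj V0 v \<inter> (W - S) \<union> (nbrs Adj V0 v - W))"
    using finite_nbrs[OF graph] by (intro card_mono) auto
  also have "\<dots> \<le> card (nbrs Adj V0 v \<inter> (W - S)) + card (nbrs Adj V0 v - W)"
    by (rule card_Un_le)
  also have "\<dots> \<le> vol Adj V0 (W - S) + card (edges_between Adj W (V0 - W))"
    using card_nbrs_Int_le_vol[OF graph, of v "W - S"] card_nbrs_Diff_le_boundary[OF graph \<open>v \<in> W\<close>]
      \<open>v \<in> W\<close> \<open>W \<subseteq> V0\<close> by (intro add_mono) auto
  finally show ?thesis using cluster unfolding spectral_cluster_def by linarith
qed

text \<open>With y = vol(W - S) and d = d(v): the degree bound gives x = d + y \<le> 11\<epsilon> w, so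
x^2/w \<le> 11\<epsilon> x, and the quadratic bound then leaves only x \<le> \<epsilon> w / (4/9 - 11\<epsilon>) < 3\<epsilon> w.\<close>

lemma quadratic_bound_forces_small:
  fixes d y w \<epsilon> :: real
  assumes eps: "0 < \<epsilon>" "\<epsilon> \<le> 1/2000000" and "w > 0" "0 \<le> y" "y < 3 * \<epsilon> * w" "0 \<le> d"
    and d_le: "5/9 * d \<le> y + \<epsilon> * w"
    and quadratic: "4/9 * (d + y) \<le> (d + y)\<^sup>2 / w + \<epsilon> * w"
  shows "d + y < 3 * \<epsilon> * w"
proof (rule ccontr)
  define x where "x = d + y"
  assume "\<not> d + y < 3 * \<epsilon> * w"
  then have x_ge: "3 * \<epsilon> * w \<le> x" unfolding x_def by simp
  have "x \<le> 11 * (\<epsilon> * w)" using d_le \<open>y < 3 * \<epsilon> * w\<close> \<open>0 \<le> y\<close> unfolding x_def by linarith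
  then have "x * (x / w) \<le> x * (11 * \<epsilon>)"
    using \<open>w > 0\<close> \<open>0 \<le> d\<close> \<open>0 \<le> y\<close> unfolding x_def
    by (intro mult_left_mono) (simp_all add: divide_le_eq mult.commute mult.left_commute)
  then have "x\<^sup>2 / w \<le> 11 * \<epsilon> * x" by (simp add: power2_eq_square mult.commute)
  then have "x * (4/9 - 11 * \<epsilon>) \<le> \<epsilon> * w"
    using quadratic unfolding x_def[symmetric] by (simp add: algebra_simps)
  moreover have "3 * \<epsilon> * w * (4/9 - 11 * \<epsilon>) \<le> x * (4/9 - 11 * \<epsilon>)"
    using x_ge eps by (intro mult_right_mono) auto
  moreover have "0 < (\<epsilon> * w) * (1/3 - 33 * \<epsilon>)" using eps \<open>w > 0\<close> by simp
  ultimately show False by (simp add: algebra_simps)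
qed

lemma dominates_remove:
  assumes graph: "simple_graph V0 Adj"
    and eps: "0 < \<epsilon>" "\<epsilon> \<le> 1 / 2000000"
    and cluster: "spectral_cluster V0 Adj \<epsilon> W"
    and "V \<subseteq> V0" and V_closed: "closed_in_graph Adj V0 V"
    and S_closed: "closed_in_graph Adj V S" and S_dom: "dominates V0 Adj \<epsilon> S W"
    and "v \<in> S" and v_deg: "deg Adj V v > 0"
    and v_out: "real (card (nbrs Adj V v \<inter> (V - S))) \<ge> 5/9 * real (deg Adj V v)"
  shows "dominates V0 Adj \<epsilon> (S - {v}) W"
proof (cases "v \<in> W")
  case False
  then have "W \<inter> (S - {v}) = W \<inter> S" by blast
  then show ?thesis using S_dom unfolding dominates_def by simp
next
  case True
  have "W \<subseteq> V0" and w_pos: "vol Adj V0 W > 0" using cluster unfolding spectral_cluster_def by auto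
  then have finW: "finite W" using graph unfolding simple_graph_def by (auto intro: finite_subset)
  have "S \<subseteq> V" using S_closed unfolding closed_in_graph_def by blast
  have T_closed: "closed_in_graph Adj V0 (S - {v})"
    using closed_in_graph_trans[OF graph \<open>V \<subseteq> V0\<close> V_closed]
      closed_in_graph_remove[OF graph S_closed v_deg v_out] .
  have "4/9 * real (vol Adj V0 (W - (S - {v})))
      \<le> (real (vol Adj V0 (W - (S - {v}))))\<^sup>2 / real (vol Adj V0 W) + \<epsilon> * real (vol Adj V0 W)"
    using spectral_cluster_vol_Diff_closed[OF graph cluster T_closed] .
  moreover have "vol Adj V0 (W - (S - {v})) = deg Adj V0 v + vol Adj V0 (W - S)"
  proof -
    have "W - (S - {v}) = insert v (W - S)" using True \<open>v \<in> S\<close> by blast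
    then show ?thesis using finW \<open>v \<in> S\<close> unfolding vol_def by simp
  qed
  moreover have "5/9 * real (deg Adj V0 v) \<le> real (vol Adj V0 (W - S)) + \<epsilon> * real (vol Adj V0 W)"
    using card_nbrs_Diff_induced[OF graph \<open>V \<subseteq> V0\<close> \<open>S \<subseteq> V\<close>, of "5/9" v] v_out
      spectral_cluster_card_nbrs_Diff[OF graph cluster True, of S]
    unfolding nbrs_Int_Diff by simp
  ultimately show ?thesis
    using quadratic_bound_forces_small[OF eps] w_pos S_dom finW unfolding dominates_iff_vol_Diff[OF finW] by simp
qed

theorem mainTheorem11:
  fixes V0 V S W :: "'a set" and Adj :: "'a \<Rightarrow> 'a \<Rightarrow> bool" and \<epsilon> :: real and v :: 'a
  assumes graph: "simple_graph V0 Adj"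
    and eps: "0 < \<epsilon>" "\<epsilon> \<le> 1 / 2000000"
    and cluster: "spectral_cluster V0 Adj \<epsilon> W"
    and V_sub: "V \<subseteq> V0"
    and V_closed: "closed_in_graph Adj V0 V"
    and S_closed: "closed_in_graph Adj V S"
    and S_dom: "dominates V0 Adj \<epsilon> S W"
    and v_in: "v \<in> S"
    and v_deg: "deg Adj V v > 0"
    and v_out: "real (card (nbrs Adj V v \<inter> (V - S))) \<ge> 5/9 * real (deg Adj V v)"
  shows "closed_in_graph Adj V (S - {v}) \<and> dominates V0 Adj \<epsilon> (S - {v}) W
    \<and> (\<forall>S'. (improve_move Adj V)\<^sup>*\<^sup>* S S' \<longrightarrow>
           closed_in_graph Adj V S' \<and> dominates V0 Adj \<epsilon> S' W)"
proof (intro conjI allI impI)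
  show "closed_in_graph Adj V (S - {v})"
    using closed_in_graph_remove[OF graph S_closed v_deg v_out] .
  show "dominates V0 Adj \<epsilon> (S - {v}) W"
    using dominates_remove[OF graph eps cluster V_sub V_closed S_closed S_dom v_in v_deg v_out] .
next
  fix S' assume "(improve_move Adj V)\<^sup>*\<^sup>* S S'"
  then have "closed_in_graph Adj V S' \<and> dominates V0 Adj \<epsilon> S' W"
  proof (induction rule: rtranclp_induct)
    case (step T T')
    then obtain u where "u \<in> T" "deg Adj V u > 0"
      "real (card (nbrs Adj V u \<inter> (V - T))) \<ge> 5/9 * real (deg Adj V u)" and "T' = T - {u}"
      unfolding improve_move_def by blast
    with step.IH show ?case
      using closed_in_graph_remove[OF graph] dominates_remove[OF graph eps cluster V_sub V_closed] by blast
  qed (use S_closed S_dom in blast)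
  then show "closed_in_graph Adj V S'" "dominates V0 Adj \<epsilon> S' W" by blast+
qed

end
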